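(* There is a constant $C$ (depending only on $r$) such that for all $N\ge1$, all $0<\delta<1/2$ and all $0<S\le\frac12N^{1-r}$, $$\sum_{k=1}^N P\Big(W_k\Big(\frac kN\Big)^r\ge\frac{(1-\delta)S}{N}\Big)\le C+g(S)(1+C\delta),$$ where $g(S)=r\,\Gamma\!\big(\tfrac{2-r}{1-r}\big)\,N\,S^{-1/(1-r)}$.
   Context: Fix $r\in(0,1)$. $W_1,W_2,\dots$ are independent random variables with $W_1=1$ and, for $k\ge2$, $P(W_k>0)=r$ and, conditional on $W_k>0$, $W_k\sim\mathrm{Beta}(1,k-1)$. (These arise as $W_k=\lim_{N\to\infty}V_{k,N}$ in the multitype Yule process with new-type probability $r$, where $V_{k,N}$ is the fraction of type-$k$ individuals among those with type in $\{1,\dots,k\}$ when the population has size $N$.) *)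

theory Defs
  imports "HOL-Probability.Probability"
begin

definition beta1_density :: "nat \<Rightarrow> real \<Rightarrow> real" where
  "beta1_density k x = (if 0 \<le> x \<and> x \<le> 1 then real (k - 1) * (1 - x) ^ (k - 2) else 0)"

text \<open>Law of W_k: W_1 = 1; for k \<ge> 2, with probability r W_k ~ Beta(1,k-1), otherwise W_k = 0.\<close>
definition W_law :: "real \<Rightarrow> nat \<Rightarrow> real measure" where
  "W_law r k = (if k \<le> 1 then return lborel 1
     else measure_pmf (bernoulli_pmf r) \<bind>
            (\<lambda>b. if b then density lborel (\<lambda>x. ennreal (beta1_density k x))
                  else return lborel 0))"

definition g_fun :: "real \<Rightarrow> nat \<Rightarrow> real \<Rightarrow> real" where
  "g_fun r N S = r * Gamma ((2 - r) / (1 - r)) * real N * S powr (- 1 / (1 - r))"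

end

theory Submission
  imports Defs
begin

text \<open>For k \<ge> 2 one has P(W_k \<ge> u) = r (1 - u)^(k-1) \<le> r e^(-(k-1) u). With
  a = (1 - \<delta>) S N^(r-1) \<le> 1/2 the k-th event is W_k \<ge> a k^(-r), so the k-th term is at most
  r e^(-a k^(1-r)) (1 + 2 a k^(-r)). Put s = 1/(1 - r): the points a k^(1/s) cut the half-line into
  cells on which the Gamma(s) integrand has mass at least e^(-a k^(1/s)) a^s / s, hence
  \<Sum>_k e^(-a k^(1-r)) \<le> Gamma(s + 1) a^(-s) = g(S) (1 - \<delta>)^(-s) / r. The correction terms
  a k^(-r) e^(-a k^(1-r)) are dominated by the decrements of e^(-a k^(1-r)) divided by 1 - r, so they
  telescope to at most 1/(1 - r), and finally (1 - \<delta>)^(-s) = 1 + O(\<delta>).\<close>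

lemma beta1_density_measurable [measurable]:
  "(\<lambda>x. ennreal (beta1_density k x)) \<in> borel_measurable borel"
  unfolding beta1_density_def by measurable

lemma beta1_density_tail:
  assumes "k \<ge> 2" "0 \<le> u" "u \<le> 1"
  shows "(\<integral>\<^sup>+x. ennreal (beta1_density k x) * indicator {u..} x \<partial>lborel) = ennreal ((1 - u) ^ (k - 1))"
proof -
  obtain m where k: "k = m + 2" using \<open>k \<ge> 2\<close> by (metis add.commute le_Suc_ex)
  have "(\<integral>\<^sup>+x. ennreal (beta1_density k x) * indicator {u..} x \<partial>lborel)
      = (\<integral>\<^sup>+x. ennreal (real (Suc m) * (1 - x) ^ m) * indicator {u..1} x \<partial>lborel)"
    using assms by (intro nn_integral_cong) (auto simp: k beta1_density_def indicator_def)
  also have "\<dots> = ennreal ((\<lambda>x. - ((1 - x) ^ Suc m)) 1 - (\<lambda>x. - ((1 - x) ^ Suc m)) u)"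
  proof (rule nn_integral_FTC_Icc)
    fix x
    show "((\<lambda>x. - ((1 - x) ^ Suc m)) has_real_derivative real (Suc m) * (1 - x) ^ m) (at x)"
      by (auto intro!: derivative_eq_intros) (cases m; simp add: algebra_simps)
  qed (use assms in auto)
  finally show ?thesis by (simp add: k)
qed

lemma prob_space_beta1:
  assumes "k \<ge> 2"
  shows "prob_space (density lborel (\<lambda>x. ennreal (beta1_density k x)))"
proof
  have "emeasure (density lborel (\<lambda>x. ennreal (beta1_density k x))) UNIV
     = (\<integral>\<^sup>+x. ennreal (beta1_density k x) * indicator {0..} x \<partial>lborel)"
    by (subst emeasure_density) (auto intro!: nn_integral_cong simp: beta1_density_def indicator_def)
  then show "emeasure (density lborel (\<lambda>x. ennreal (beta1_density k x)))
      (space (density lborel (\<lambda>x. ennreal (beta1_density k x)))) = 1"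
    using assms by (simp add: beta1_density_tail)
qed

lemma W_law_tail:
  assumes "0 \<le> r" "r \<le> 1" "k \<ge> 2" "0 < u" "u \<le> 1"
  shows "measure (W_law r k) {u..} = r * (1 - u) ^ (k - 1)"
proof -
  let ?beta = "density lborel (\<lambda>x. ennreal (beta1_density k x))"
  let ?f = "\<lambda>b. if b then ?beta else return lborel (0::real)"
  have "?f \<in> measurable (measure_pmf (bernoulli_pmf r)) (subprob_algebra lborel)"
    using prob_space_beta1 [OF \<open>k \<ge> 2\<close>]
    by (auto simp: space_subprob_algebra prob_space_imp_subprob_space prob_space_return)
  then have "emeasure (W_law r k) {u..}
      = (\<integral>\<^sup>+b. emeasure (?f b) {u..} \<partial>measure_pmf (bernoulli_pmf r))"
    using assms unfolding W_law_def by (simp add: emeasure_bind)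
  also have "\<dots> = emeasure ?beta {u..} * r + emeasure (return lborel 0) {u..} * (1 - r)"
    using assms by (subst nn_integral_bernoulli_pmf) auto
  also have "\<dots> = ennreal ((1 - u) ^ (k - 1)) * r"
    using assms by (simp add: emeasure_density beta1_density_tail)
  finally show ?thesis
    unfolding measure_def using assms by (simp add: ennreal_mult'' [symmetric] mult.commute)
qed

lemma W_law_scaled_tail_le:
  assumes r: "0 \<le> r" "r \<le> 1" and k: "k \<ge> 2" and a: "0 < a" "a \<le> 1/2"
  shows "measure (W_law r k) {a * real k powr (- r)..}
    \<le> r * (1 + 2 * a * real k powr (- r)) * exp (- (a * real k powr (1 - r)))"
proof -
  define u where "u = a * real k powr (- r)"
  have "real k powr (- r) \<le> 1" using k r by (simp add: powr_minus inverse_le_1_iff ge_one_powr_ge_zero)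
  then have "u \<le> a" using a unfolding u_def by (simp add: mult_left_le)
  moreover have "0 < u" using a k by (simp add: u_def)
  ultimately have u: "0 < u" "u \<le> 1/2" using a by auto
  have "real (k - 1) * u = a * real k powr (1 - r) - u"
    using k by (simp add: u_def of_nat_diff powr_diff powr_minus field_simps)
  then have exp_power: "exp (- u) ^ (k - 1) = exp (- (a * real k powr (1 - r))) * exp u"
    by (simp add: exp_of_nat_mult [symmetric] exp_add [symmetric])
  have "measure (W_law r k) {u..} = r * (1 - u) ^ (k - 1)"
    using r k u by (intro W_law_tail) auto
  also have "\<dots> \<le> r * exp (- u) ^ (k - 1)"
    using r u by (intro mult_left_mono power_mono) (auto simp: exp_ge_add_one_self [of "- u", simplified])
  also have "\<dots> = r * exp (- (a * real k powr (1 - r))) * exp u"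
    unfolding exp_power by (simp only: mult.assoc)
  also have "\<dots> \<le> r * exp (- (a * real k powr (1 - r))) * (1 + 2 * u)"
    using r u exp_bound_lemma [of u] by (intro mult_left_mono) auto
  finally show ?thesis by (simp add: u_def mult_ac)
qed

lemma Gamma_integrand_interval_ge:
  fixes s A B :: real
  assumes s: "0 < s" and AB: "0 < A" "A \<le> B"
  shows "ennreal (exp (- B) * (B powr s - A powr s) / s)
    \<le> (\<integral>\<^sup>+y. ennreal (indicator {0..} y * y powr (s - 1) / exp y) * indicator {A<..B} y \<partial>lborel)"
proof -
  have "(\<integral>\<^sup>+y. ennreal (s * y powr (s - 1)) * indicator {A..B} y \<partial>lborel) = ennreal (B powr s - A powr s)"
  proof (rule nn_integral_FTC_Icc)
    fix y assume "y \<in> {A..B}"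
    then show "((\<lambda>y. y powr s) has_real_derivative s * y powr (s - 1)) (at y)" "0 \<le> s * y powr (s - 1)"
      using s AB by (auto intro: has_real_derivative_powr)
  qed (use AB in auto)
  then have "ennreal (exp (- B) * (B powr s - A powr s) / s)
      = (\<integral>\<^sup>+y. ennreal (exp (- B) / s) * (ennreal (s * y powr (s - 1)) * indicator {A..B} y) \<partial>lborel)"
    using s AB powr_mono2 [of s A B]
    by (subst nn_integral_cmult) (auto simp: ennreal_mult'' [symmetric])
  also have "\<dots> \<le> (\<integral>\<^sup>+y. ennreal (indicator {0..} y * y powr (s - 1) / exp y) * indicator {A<..B} y \<partial>lborel)"
  proof (rule nn_integral_mono_AE)
    show "AE y in lborel. ennreal (exp (- B) / s) * (ennreal (s * y powr (s - 1)) * indicator {A..B} y)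
       \<le> ennreal (indicator {0..} y * y powr (s - 1) / exp y) * indicator {A<..B} y"
      using AE_lborel_singleton [of A]
    proof eventually_elim
      case (elim y)
      show ?case
      proof (cases "y \<in> {A..B}")
        case True
        with elim AB have y: "A < y" "y \<le> B" by auto
        then have "y powr (s - 1) * exp (- B) \<le> y powr (s - 1) * exp (- y)"
          by (intro mult_left_mono) auto
        then show ?thesis
          using y AB s by (simp add: ennreal_mult'' [symmetric] exp_minus field_simps)
      qed simp
    qed
  qed
  finally show ?thesis .
qed

lemma sum_exp_neg_powr_le_Gamma:
  fixes s a :: real
  assumes s: "0 < s" and a: "0 < a"
  shows "(\<Sum>k = 2..N. exp (- (a * real k powr (1 / s)))) \<le> Gamma (s + 1) * a powr (- s)"
proof -
  define f where "f k = a * real k powr (1 / s)" for k :: nat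
  define \<Gamma> where "\<Gamma> = density lborel (\<lambda>y. ennreal (indicator {0..} y * y powr (s - 1) / exp y))"
  have f_powr: "f k powr s = a powr s * real k" for k
    using a s by (simp add: f_def powr_mult powr_powr)
  have f_mono: "f j \<le> f k" if "j \<le> k" for j k
    using a s that by (auto simp: f_def intro!: mult_left_mono powr_mono2)
  have cell: "ennreal (exp (- f k) * a powr s / s) \<le> emeasure \<Gamma> {f (k - 1)<..f k}" if "k \<in> {2..N}" for k
  proof -
    have "0 < f (k - 1)" using that a by (simp add: f_def)
    then have "ennreal (exp (- f k) * (f k powr s - f (k - 1) powr s) / s) \<le> emeasure \<Gamma> {f (k - 1)<..f k}"
      unfolding \<Gamma>_def using s f_mono [of "k - 1" k] by (simp add: emeasure_density Gamma_integrand_interval_ge)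
    moreover have "f k powr s - f (k - 1) powr s = a powr s"
      using that by (simp add: f_powr of_nat_diff algebra_simps)
    ultimately show ?thesis by simp
  qed
  have cells_disjoint: "{f (j - 1)<..f j} \<inter> {f (k - 1)<..f k} = {}" if "j < k" for j k
  proof -
    have "f j \<le> f (k - 1)" using that by (intro f_mono) simp
    then show ?thesis by auto
  qed
  have disjoint: "disjoint_family_on (\<lambda>k. {f (k - 1)<..f k}) {2..N}"
    unfolding disjoint_family_on_def by (metis cells_disjoint Int_commute linorder_neqE_nat)
  have "ennreal (\<Sum>k = 2..N. exp (- f k) * a powr s / s) = (\<Sum>k = 2..N. ennreal (exp (- f k) * a powr s / s))"
    using s by (intro sum_ennreal [symmetric]) auto
  also have "\<dots> \<le> (\<Sum>k = 2..N. emeasure \<Gamma> {f (k - 1)<..f k})"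
    by (intro sum_mono cell)
  also have "\<dots> = emeasure \<Gamma> (\<Union>k\<in>{2..N}. {f (k - 1)<..f k})"
    using disjoint by (intro sum_emeasure) (auto simp: \<Gamma>_def)
  also have "\<dots> \<le> emeasure \<Gamma> (space \<Gamma>)"
    by (rule emeasure_space)
  also have "\<dots> = ennreal (Gamma s)"
    using s by (simp add: \<Gamma>_def emeasure_density Gamma_conv_nn_integral_real)
  finally have "(\<Sum>k = 2..N. exp (- f k)) * a powr s / s \<le> Gamma s"
    using s by (simp add: ennreal_le_iff sum_divide_distrib sum_distrib_right)
  moreover have "Gamma (s + 1) = s * Gamma s"
    using s by (intro Gamma_plus1) (auto simp: nonpos_Ints_def)
  ultimately show ?thesis
    using s a by (simp add: f_def field_simps powr_minus)
qed

lemma exp_neg_powr_decrement_ge: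
  fixes p a x :: real
  assumes p: "0 < p" "p \<le> 1" and a: "0 \<le> a" and x: "1 < x"
  shows "a * p * x powr (p - 1) * exp (- (a * x powr p))
    \<le> exp (- (a * (x - 1) powr p)) - exp (- (a * x powr p))"
proof -
  have "\<exists>z>x - 1. z < x \<and> x powr p - (x - 1) powr p = (x - (x - 1)) * (p * z powr (p - 1))"
    by (rule MVT2) (use x in \<open>auto intro!: has_real_derivative_powr\<close>)
  then obtain z where z: "x - 1 < z" "z < x" and mvt: "x powr p - (x - 1) powr p = p * z powr (p - 1)"
    by auto
  define D where "D = a * (x powr p - (x - 1) powr p)"
  have "x powr (p - 1) \<le> z powr (p - 1)" using z x p by (intro powr_mono2') auto
  then have "a * (p * x powr (p - 1)) \<le> a * (p * z powr (p - 1))"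
    using p a by (intro mult_left_mono) auto
  then have "a * p * x powr (p - 1) \<le> D" by (simp add: D_def mvt mult.assoc)
  also have "D \<le> exp D - 1" using exp_ge_add_one_self [of D] by linarith
  finally have "exp (- (a * x powr p)) * (a * p * x powr (p - 1)) \<le> exp (- (a * x powr p)) * (exp D - 1)"
    by (intro mult_left_mono) auto
  also have "\<dots> = exp (- (a * (x - 1) powr p)) - exp (- (a * x powr p))"
    by (simp add: D_def algebra_simps exp_add [symmetric])
  finally show ?thesis by (simp add: mult_ac)
qed

lemma sum_powr_exp_neg_powr_le:
  fixes p a :: real
  assumes p: "0 < p" "p \<le> 1" and a: "0 \<le> a"
  shows "(\<Sum>k = 2..N. a * real k powr (p - 1) * exp (- (a * real k powr p))) \<le> 1 / p"
proof -
  define h where "h k = exp (- (a * real k powr p))" for k :: nat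
  have "p * (\<Sum>k = 2..N. a * real k powr (p - 1) * h k) \<le> 1 - h N"
  proof (induction N)
    case (Suc N)
    show ?case
    proof (cases "N = 0")
      case False
      then have "a * p * real (Suc N) powr (p - 1) * h (Suc N) \<le> h N - h (Suc N)"
        using exp_neg_powr_decrement_ge [OF p a, of "real (Suc N)"] by (simp add: h_def)
      with Suc.IH False show ?thesis by (simp add: distrib_left mult_ac)
    qed (use p a in \<open>simp add: h_def\<close>)
  qed (simp add: h_def)
  moreover have "0 \<le> h N" by (simp add: h_def)
  ultimately have "p * (\<Sum>k = 2..N. a * real k powr (p - 1) * h k) \<le> 1" by linarith
  then show ?thesis using p by (simp add: h_def field_simps)
qed

lemma one_minus_powr_neg_le:
  fixes s d :: real
  assumes s: "0 < s" and d: "0 < d" "d < 1/2"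
  shows "(1 - d) powr (- s) \<le> 1 + 2 * s * exp s * d"
proof -
  have "- d - 2 * d\<^sup>2 \<le> ln (1 - d)" using d by (intro ln_one_minus_pos_lower_bound) auto
  moreover have "d\<^sup>2 \<le> d / 2" using d by (simp add: power2_eq_square)
  ultimately have "- ln (1 - d) \<le> 2 * d" by linarith
  from mult_left_mono [OF this, of s] have "- s * ln (1 - d) \<le> 2 * s * d" using s by simp
  then have "(1 - d) powr (- s) \<le> exp (2 * s * d)" using d by (simp add: powr_def)
  also have "\<dots> \<le> 1 + 2 * s * d * exp (2 * s * d)"
    using exp_ge_add_one_self [of "- (2 * s * d)"] by (simp add: exp_minus field_simps)
  also have "\<dots> \<le> 1 + 2 * s * d * exp s"
    using s d by (intro add_left_mono mult_left_mono) auto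
  finally show ?thesis by (simp add: mult_ac)
qed

lemma sum_W_law_scaled_tails_le:
  fixes r a :: real
  assumes r: "0 < r" "r < 1" and a: "0 < a" "a \<le> 1/2"
  shows "(\<Sum>k = 1..N. measure (W_law r k) {a * real k powr (- r)..})
    \<le> 1 + 2 * r / (1 - r) + r * Gamma ((2 - r) / (1 - r)) * a powr (- 1 / (1 - r))"
proof -
  define s where "s = 1 / (1 - r)"
  have s: "0 < s" "1 / s = 1 - r" "(2 - r) / (1 - r) = s + 1" "- 1 / (1 - r) = - s"
    using r by (auto simp: s_def field_simps)
  let ?M = "\<lambda>k. measure (W_law r k) {a * real k powr (- r)..}"
  let ?E = "\<lambda>k. exp (- (a * real k powr (1 - r)))"
  have "(\<Sum>k = 1..N. ?M k) \<le> (\<Sum>k \<in> insert 1 {2..N}. ?M k)"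
    by (intro sum_mono2) auto
  also have "\<dots> = ?M 1 + (\<Sum>k = 2..N. ?M k)"
    by simp
  also have "\<dots> \<le> 1 + (\<Sum>k = 2..N. r * (1 + 2 * a * real k powr (- r)) * ?E k)"
    using r a by (intro add_mono sum_mono W_law_scaled_tail_le) (auto simp: W_law_def measure_return)
  also have "\<dots> = 1 + r * (\<Sum>k = 2..N. exp (- (a * real k powr (1 / s))))
      + 2 * r * (\<Sum>k = 2..N. a * real k powr ((1 - r) - 1) * ?E k)"
    by (simp add: s sum.distrib sum_distrib_left algebra_simps)
  also have "\<dots> \<le> 1 + r * (Gamma (s + 1) * a powr (- s)) + 2 * r * (1 / (1 - r))"
    using r s a
    by (intro add_mono mult_left_mono sum_exp_neg_powr_le_Gamma sum_powr_exp_neg_powr_le) auto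
  finally show ?thesis unfolding s(3,4) by (simp add: ac_simps)
qed

lemma scaled_tail_event_eq:
  fixes t r :: real
  assumes "k \<ge> 1" "N \<ge> 1"
  shows "{w. w * (real k / real N) powr r \<ge> t / real N} = {t * real N powr (r - 1) * real k powr (- r)..}"
proof -
  have c: "(real k / real N) powr r > 0" using assms by simp
  have threshold: "t / real N / (real k / real N) powr r = t * real N powr (r - 1) * real k powr (- r)"
    using assms by (simp add: powr_divide powr_minus powr_diff field_simps)
  show ?thesis
    by (rule set_eqI) (simp only: mem_Collect_eq atLeast_iff pos_divide_le_eq [OF c, symmetric] threshold)
qed

lemma g_fun_scaled:
  fixes r S c :: real
  assumes r: "0 < r" "r < 1" and "N \<ge> 1" "0 < S" "0 < c"
  shows "r * Gamma ((2 - r) / (1 - r)) * (c * S * real N powr (r - 1)) powr (- 1 / (1 - r))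
    = g_fun r N S * c powr (- 1 / (1 - r))"
proof -
  have "(r - 1) * (- 1 / (1 - r)) = 1" using r by (simp add: field_simps)
  then have "(real N powr (r - 1)) powr (- 1 / (1 - r)) = real N" by (simp add: powr_powr)
  then show ?thesis using assms by (simp add: g_fun_def powr_mult mult_ac)
qed

theorem lemma4p5:
  fixes r :: real
  assumes "0 < r" "r < 1"
  shows "\<exists>C::real. \<forall>(N::nat) (\<delta>::real) (S::real).
           N \<ge> 1 \<longrightarrow> 0 < \<delta> \<longrightarrow> \<delta> < 1/2 \<longrightarrow> 0 < S \<longrightarrow>
           S \<le> 1/2 * real N powr (1 - r) \<longrightarrow>
           (\<Sum>k = 1..N. measure (W_law r k)
               {w. w * (real k / real N) powr r \<ge> (1 - \<delta>) * S / real N})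
             \<le> C + g_fun r N S * (1 + C * \<delta>)"
proof -
  define s where "s = 1 / (1 - r)"
  define C where "C = max (1 + 2 * r / (1 - r)) (2 * s * exp s)"
  show ?thesis
  proof (intro exI [of _ C] allI impI)
    fix N :: nat and d S :: real
    assume N: "N \<ge> 1" and d: "0 < d" "d < 1/2" and S: "0 < S" "S \<le> 1/2 * real N powr (1 - r)"
    define a where "a = (1 - d) * S * real N powr (r - 1)"
    have "a \<le> S * real N powr (r - 1)"
      using d S by (simp add: a_def mult_left_le_one_le)
    also have "\<dots> \<le> 1/2"
      using S N mult_right_mono [OF S(2), of "real N powr (r - 1)"] by (simp add: powr_add [symmetric])
    finally have a: "0 < a" "a \<le> 1/2"
      using d S N by (auto simp: a_def)
    have "(\<Sum>k = 1..N. measure (W_law r k) {w. w * (real k / real N) powr r \<ge> (1 - d) * S / real N})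
        = (\<Sum>k = 1..N. measure (W_law r k) {a * real k powr (- r)..})"
      using N by (intro sum.cong) (simp_all add: a_def scaled_tail_event_eq)
    also have "\<dots> \<le> 1 + 2 * r / (1 - r) + r * Gamma ((2 - r) / (1 - r)) * a powr (- 1 / (1 - r))"
      using assms a by (rule sum_W_law_scaled_tails_le)
    also have "\<dots> = 1 + 2 * r / (1 - r) + g_fun r N S * (1 - d) powr (- s)"
      using g_fun_scaled [OF assms N S(1), of "1 - d"] d by (simp add: a_def s_def)
    also have "\<dots> \<le> C + g_fun r N S * (1 + C * d)"
    proof -
      have "(1 - d) powr (- s) \<le> 1 + 2 * s * exp s * d"
        using assms d by (intro one_minus_powr_neg_le) (auto simp: s_def)
      also have "\<dots> \<le> 1 + C * d"
        using d by (intro add_left_mono mult_right_mono) (auto simp: C_def)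
      finally show ?thesis
        using assms by (intro add_mono mult_left_mono) (auto simp: C_def g_fun_def)
    qed
    finally show "(\<Sum>k = 1..N. measure (W_law r k)
        {w. w * (real k / real N) powr r \<ge> (1 - d) * S / real N}) \<le> C + g_fun r N S * (1 + C * d)" .
  qed
qed

end
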